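(* Let $n$ be odd and let $L=\bigoplus_{i\in\mathbb{Z}/n\mathbb{Z}}L_i$ be a $(\mathbb{Z}/n\mathbb{Z})$-graded Lie algebra over a field with $L_0=0$ such that $$\big[[x_{d_1},x_{d_2}],[x_{d_3},x]\big]=0$$ for all $x_{d_i}\in L_{d_i}$ and all $x\in L$ whenever $(d_1,d_2,d_3)$ is $(-1)$-independent. Then $L$ is metabelian, i.e. $[[L,L],[L,L]]=0$.
   Context: A $(\mathbb{Z}/n\mathbb{Z})$-graded Lie algebra is $L=\bigoplus_{i=0}^{n-1}L_i$ with $[L_i,L_j]\subseteq L_{i+j \bmod n}$. A sequence $(a_1,\dots,a_k)$ in $\mathbb{Z}/n\mathbb{Z}$ is $(-1)$-dependent if $t_1a_1+\dots+t_ka_k=0$ for some $t_i\in\{0,1\}$ not all zero, and $(-1)$-independent otherwise. *)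

theory Defs
  imports Main "HOL.Vector_Spaces"
begin

definition lie_algebra :: "('k::field \<Rightarrow> 'v::ab_group_add \<Rightarrow> 'v) \<Rightarrow> ('v \<Rightarrow> 'v \<Rightarrow> 'v) \<Rightarrow> bool" where
  "lie_algebra scale br \<longleftrightarrow>
     vector_space scale \<and>
     (\<forall>x y z. br (x + y) z = br x z + br y z) \<and>
     (\<forall>x y z. br x (y + z) = br x y + br x z) \<and>
     (\<forall>c x y. br (scale c x) y = scale c (br x y)) \<and>
     (\<forall>c x y. br x (scale c y) = scale c (br x y)) \<and>
     (\<forall>x. br x x = 0) \<and>
     (\<forall>x y z. br x (br y z) + br y (br z x) + br z (br x y) = 0)"

definition graded_lie_algebra ::
  "('k::field \<Rightarrow> 'v::ab_group_add \<Rightarrow> 'v) \<Rightarrow> ('v \<Rightarrow> 'v \<Rightarrow> 'v) \<Rightarrow> nat \<Rightarrow> (nat \<Rightarrow> 'v set) \<Rightarrow> bool" where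
  "graded_lie_algebra scale br n G \<longleftrightarrow>
     lie_algebra scale br \<and> 0 < n \<and>
     (\<forall>i<n. module.subspace scale (G i)) \<and>
     (\<forall>x. \<exists>!f. (\<forall>i<n. f i \<in> G i) \<and> (\<forall>i. n \<le> i \<longrightarrow> f i = 0) \<and> x = (\<Sum>i<n. f i)) \<and>
     (\<forall>i j x y. i < n \<longrightarrow> j < n \<longrightarrow> x \<in> G i \<longrightarrow> y \<in> G j \<longrightarrow> br x y \<in> G ((i + j) mod n))"

definition minus_one_dependent :: "nat \<Rightarrow> nat list \<Rightarrow> bool" where
  "minus_one_dependent n ds \<longleftrightarrow>
     (\<exists>t::nat \<Rightarrow> nat. (\<forall>i<length ds. t i \<in> {0, 1}) \<and> (\<exists>i<length ds. t i \<noteq> 0) \<and>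
        (\<Sum>i<length ds. t i * ds ! i) mod n = 0)"

definition minus_one_independent :: "nat \<Rightarrow> nat list \<Rightarrow> bool" where
  "minus_one_independent n ds \<longleftrightarrow> \<not> minus_one_dependent n ds"

definition lie_prod :: "('k::field \<Rightarrow> 'v::ab_group_add \<Rightarrow> 'v) \<Rightarrow> ('v \<Rightarrow> 'v \<Rightarrow> 'v) \<Rightarrow> 'v set \<Rightarrow> 'v set \<Rightarrow> 'v set" where
  "lie_prod scale br A B = module.span scale {br a b | a b. a \<in> A \<and> b \<in> B}"

end

theory Submission
  imports Defs
begin

(* Since the double commutator is multilinear, it suffices to show that
   [[x_a, x_b], [x_c, x_d]] = 0 for homogeneous elements of degrees a, b, c, d. This is
   immediate from L_0 = 0 when one of a, b, c, d, a + b, c + d, a + b + c + d is 0, and from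
   the hypothesis (after antisymmetry) when one of the triples (a,b,c), (a,b,d), (c,d,a),
   (c,d,b) is (-1)-independent. In the remaining situation a short case analysis in Z/nZ,
   where n odd rules out 2a = 0, leaves two configurations: a + b + c = a + b + d = 0, or
   a = -c = -d and b + c + d = 0 (up to the symmetries of the double commutator). In both the
   Jacobi identity expresses the commutator through brackets of degree 0, which vanish. *)

lemma minus_one_dependent_three_iff:
  "minus_one_dependent n [a, b, c] \<longleftrightarrow>
     n dvd a \<or> n dvd b \<or> n dvd c \<or> n dvd (a + b) \<or> n dvd (a + c) \<or> n dvd (b + c) \<or>
     n dvd (a + b + c)"
proof -
  have three: "{..<length [a, b, c]} = {0, 1, 2}" by auto
  have "minus_one_dependent n [a, b, c] \<longleftrightarrow> (\<exists>t::nat \<Rightarrow> nat.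
      (\<forall>i\<in>{0, 1, 2}. t i \<in> {0, 1}) \<and> (\<exists>i\<in>{0, 1, 2}. t i \<noteq> 0) \<and>
      n dvd (\<Sum>i\<in>{0, 1, 2}. t i * [a, b, c] ! i))"
    by (simp only: minus_one_dependent_def dvd_eq_mod_eq_0 lessThan_iff[symmetric] three
        Ball_def Bex_def)
  also have "\<dots> \<longleftrightarrow> (\<exists>t0\<in>{0, 1}. \<exists>t1\<in>{0, 1}. \<exists>t2\<in>{0, 1::nat}.
      (t0 \<noteq> 0 \<or> t1 \<noteq> 0 \<or> t2 \<noteq> 0) \<and> n dvd (t0 * a + t1 * b + t2 * c))"
    (is "?coefficient_function \<longleftrightarrow> ?coefficients")
  proof
    assume ?coefficient_function
    then obtain t :: "nat \<Rightarrow> nat"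
      where "\<forall>i\<in>{0, 1, 2}. t i \<in> {0, 1}" "\<exists>i\<in>{0, 1, 2}. t i \<noteq> 0"
        "n dvd (\<Sum>i\<in>{0, 1, 2}. t i * [a, b, c] ! i)" by blast
    then show ?coefficients
      by (intro bexI[of _ "t 0"] bexI[of _ "t 1"] bexI[of _ "t 2"]) (auto simp: add.assoc)
  next
    assume ?coefficients
    then obtain t0 t1 t2 :: nat where "t0 \<in> {0, 1}" "t1 \<in> {0, 1}" "t2 \<in> {0, 1}"
      "t0 \<noteq> 0 \<or> t1 \<noteq> 0 \<or> t2 \<noteq> 0" "n dvd (t0 * a + t1 * b + t2 * c)" by blast
    then show ?coefficient_function
      by (intro exI[of _ "\<lambda>i. if i = 0 then t0 else if i = 1 then t1 else t2"])
        (auto simp: add.assoc)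
  qed
  also have "\<dots> \<longleftrightarrow> n dvd a \<or> n dvd b \<or> n dvd c \<or> n dvd (a + b) \<or> n dvd (a + c) \<or>
      n dvd (b + c) \<or> n dvd (a + b + c)"
    by auto
  finally show ?thesis .
qed

lemma minus_one_dependent_mod:
  "minus_one_dependent n (map (\<lambda>d. d mod n) ds) \<longleftrightarrow> minus_one_dependent n ds"
proof -
  have "(\<Sum>i<length ds. t i * (map (\<lambda>d. d mod n) ds ! i)) mod n =
      (\<Sum>i<length ds. t i * ds ! i) mod n" for t :: "nat \<Rightarrow> nat"
  proof -
    have "(\<Sum>i<length ds. t i * (map (\<lambda>d. d mod n) ds ! i)) mod n
        = (\<Sum>i<length ds. t i * (ds ! i mod n) mod n) mod n"
      by (simp add: mod_sum_eq)
    also have "\<dots> = (\<Sum>i<length ds. t i * ds ! i) mod n"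
      by (simp add: mod_mult_right_eq mod_sum_eq)
    finally show ?thesis .
  qed
  then show ?thesis by (simp add: minus_one_dependent_def)
qed

lemma opposite_pair_cases:
  fixes n a b c d :: nat
  assumes "odd n" "\<not> n dvd a" "\<not> n dvd (a + b + c + d)" "n dvd (a + c)"
    and "n dvd (a + d) \<or> n dvd (b + d) \<or> n dvd (a + b + d)"
    and "n dvd (b + c) \<or> n dvd (b + d) \<or> n dvd (b + c + d)"
  shows "n dvd (a + d) \<and> n dvd (b + c + d) \<or> n dvd (b + c) \<and> n dvd (a + b + d)"
proof -
  have not_bd: "\<not> n dvd (b + d)"
  proof
    assume "n dvd (b + d)"
    with \<open>n dvd (a + c)\<close> have "n dvd (a + c) + (b + d)" by (rule dvd_add)
    with assms(3) show False by (metis add.commute add.left_commute)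
  qed
  have "\<not> (n dvd (a + d) \<and> n dvd (b + c))"
  proof
    assume "n dvd (a + d) \<and> n dvd (b + c)"
    then have "n dvd (a + c) + (b + d)"
      by (metis dvd_add add.commute add.left_commute)
    with \<open>n dvd (a + c)\<close> not_bd show False using dvd_add_right_iff by blast
  qed
  moreover have "\<not> (n dvd (a + b + d) \<and> n dvd (b + c + d))"
  proof
    assume "n dvd (a + b + d) \<and> n dvd (b + c + d)"
    then have "n dvd (a + b + d) + (a + c)" using \<open>n dvd (a + c)\<close> by simp
    also have "(a + b + d) + (a + c) = 2 * a + (b + c + d)" by simp
    finally have "n dvd 2 * a + (b + c + d)" .
    then have "n dvd 2 * a"
      using \<open>n dvd (a + b + d) \<and> n dvd (b + c + d)\<close> dvd_add_left_iff by blast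
    with assms(1,2) show False using coprime_dvd_mult_right_iff[of n 2 a] by simp
  qed
  ultimately show ?thesis using assms(5,6) not_bd by blast
qed

locale Lie_algebra =
  fixes scale :: "'k::field \<Rightarrow> 'v::ab_group_add \<Rightarrow> 'v"
    and br :: "'v \<Rightarrow> 'v \<Rightarrow> 'v"
  assumes lie_algebra: "lie_algebra scale br"
begin

sublocale vector_space scale
  using lie_algebra by (simp add: lie_algebra_def)

lemma
  shows bracket_add_left: "br (x + y) z = br x z + br y z"
    and bracket_add_right: "br x (y + z) = br x y + br x z"
    and bracket_scale_left: "br (scale c x) y = scale c (br x y)"
    and bracket_scale_right: "br x (scale c y) = scale c (br x y)"
    and bracket_self: "br x x = 0"
    and jacobi: "br x (br y z) + br y (br z x) + br z (br x y) = 0"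
  using lie_algebra unfolding lie_algebra_def by blast+

lemma bracket_0_left [simp]: "br 0 y = 0"
  using bracket_add_left[of 0 0 y] by simp

lemma bracket_0_right [simp]: "br x 0 = 0"
  using bracket_add_right[of x 0 0] by simp

lemma bracket_antisym: "br y x = - br x y"
proof -
  have "br y x + br x y = br (x + y) (x + y)"
    by (simp only: bracket_add_left bracket_add_right) (simp add: bracket_self)
  then show ?thesis by (simp add: bracket_self eq_neg_iff_add_eq_0)
qed

lemma bracket_minus_right: "br x (- y) = - br x y"
  using bracket_add_right[of x "- y" y, symmetric] by (simp add: eq_neg_iff_add_eq_0)

lemma bracket_minus_left: "br (- x) y = - br x y"
  using bracket_add_left[of "- x" x y, symmetric] by (simp add: eq_neg_iff_add_eq_0)

lemma bracket_leibniz: "br x (br y z) = br (br x y) z + br y (br x z)"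
proof -
  have "br y (br z x) = - br y (br x z)" by (simp add: bracket_antisym[of z x] bracket_minus_right)
  moreover have "br z (br x y) = - br (br x y) z" by (rule bracket_antisym)
  ultimately show ?thesis using jacobi[of x y z] by (simp add: algebra_simps)
qed

lemma bracket_leibniz_left: "br (br x y) z = br x (br y z) - br y (br x z)"
  using bracket_leibniz[of x y z] by (simp add: eq_diff_eq)

lemma bracket_eq_0_on_spans:
  assumes "\<And>a b. a \<in> A \<Longrightarrow> b \<in> B \<Longrightarrow> br a b = 0" and "a \<in> span A" and "b \<in> span B"
  shows "br a b = 0"
proof -
  have left_kernel: "subspace {a. br a b = 0}" for b
    by (rule subspaceI) (simp_all add: bracket_add_left bracket_scale_left)
  have right_kernel: "subspace {b. br a b = 0}" for a
    by (rule subspaceI) (simp_all add: bracket_add_right bracket_scale_right)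
  have "span B \<subseteq> {b. br a b = 0}" if "a \<in> A" for a
    using assms(1) that by (intro span_minimal right_kernel) blast
  then have "span A \<subseteq> {a. br a b = 0}"
    using assms(3) by (intro span_minimal left_kernel) blast
  then show ?thesis using assms(2) by blast
qed

lemma lie_prod_eq_0:
  assumes "\<And>a b. a \<in> A \<Longrightarrow> b \<in> B \<Longrightarrow> br a b = 0"
  shows "lie_prod scale br A B = {0}"
proof -
  have "lie_prod scale br A B \<subseteq> {0}"
    unfolding lie_prod_def using assms by (intro span_minimal subspace_single_0) blast
  then show ?thesis unfolding lie_prod_def using span_zero by blast
qed

lemma metabelian_if_double_commutators_vanish:
  assumes "\<And>x y z w. br (br x y) (br z w) = 0"
  shows "lie_prod scale br (lie_prod scale br UNIV UNIV) (lie_prod scale br UNIV UNIV) = {0}"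
proof (rule lie_prod_eq_0)
  fix a b
  assume "a \<in> lie_prod scale br UNIV UNIV" and "b \<in> lie_prod scale br UNIV UNIV"
  then show "br a b = 0"
    unfolding lie_prod_def by (rule bracket_eq_0_on_spans[rotated]) (use assms in auto)
qed

end

locale graded_Lie_algebra =
  fixes scale :: "'k::field \<Rightarrow> 'v::ab_group_add \<Rightarrow> 'v"
    and br :: "'v \<Rightarrow> 'v \<Rightarrow> 'v"
    and n :: nat and G :: "nat \<Rightarrow> 'v set"
  assumes graded: "graded_lie_algebra scale br n G"
begin

sublocale Lie_algebra scale br
  using graded by unfold_locales (simp add: graded_lie_algebra_def)

(* Any natural is a degree, so degrees of brackets are plain sums, never reduced mod n. *)
definition homogeneous :: "nat \<Rightarrow> 'v \<Rightarrow> bool" where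
  "homogeneous i x \<longleftrightarrow> x \<in> G (i mod n)"

lemma homogeneous_bracket:
  assumes "homogeneous i x" and "homogeneous j y"
  shows "homogeneous (i + j) (br x y)"
proof -
  have "0 < n" using graded by (simp add: graded_lie_algebra_def)
  then have "br x y \<in> G ((i mod n + j mod n) mod n)"
    using graded assms unfolding graded_lie_algebra_def homogeneous_def by simp
  then show ?thesis by (simp add: homogeneous_def mod_add_eq)
qed

lemma homogeneous_induct [case_names zero add homogeneous]:
  assumes "P 0" and "\<And>x y. P x \<Longrightarrow> P y \<Longrightarrow> P (x + y)"
    and "\<And>i x. homogeneous i x \<Longrightarrow> P x"
  shows "P x"
proof -
  obtain f where f: "\<forall>i<n. f i \<in> G i" and x: "x = (\<Sum>i<n. f i)"
    using graded unfolding graded_lie_algebra_def by metis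
  have "P (\<Sum>i\<in>A. f i)" if "A \<subseteq> {..<n}" for A
    using finite_subset[OF that finite_lessThan] that
  proof (induction A rule: finite_induct)
    case (insert i A)
    with f have "homogeneous i (f i)" by (simp add: homogeneous_def)
    with insert show ?case by (simp add: assms)
  qed (simp add: assms)
  then show ?thesis unfolding x by blast
qed

end

locale graded_Lie_algebra_L0_trivial = graded_Lie_algebra +
  assumes L0_trivial: "G 0 = {0}"
begin

lemma homogeneous_eq_0: "homogeneous i x \<Longrightarrow> n dvd i \<Longrightarrow> x = 0"
  using L0_trivial by (simp add: homogeneous_def dvd_eq_mod_eq_0)

lemma bracket_eq_0_if_dvd:
  "homogeneous i x \<Longrightarrow> homogeneous j y \<Longrightarrow> n dvd (i + j) \<Longrightarrow> br x y = 0"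
  using homogeneous_bracket homogeneous_eq_0 by blast

definition vanishing_degrees :: "nat \<Rightarrow> nat \<Rightarrow> nat \<Rightarrow> nat \<Rightarrow> bool" where
  "vanishing_degrees a b c d \<longleftrightarrow> (\<forall>x y z w. homogeneous a x \<longrightarrow> homogeneous b y \<longrightarrow>
     homogeneous c z \<longrightarrow> homogeneous d w \<longrightarrow> br (br x y) (br z w) = 0)"

lemma vanishing_degrees_swap_left:
  assumes "vanishing_degrees a b c d"
  shows "vanishing_degrees b a c d"
  unfolding vanishing_degrees_def
proof (intro allI impI)
  fix x y z w
  assume "homogeneous b x" "homogeneous a y" "homogeneous c z" "homogeneous d w"
  then have "br (br y x) (br z w) = 0" using assms by (simp add: vanishing_degrees_def)
  then show "br (br x y) (br z w) = 0" by (simp add: bracket_antisym[of x y] bracket_minus_left)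
qed

lemma vanishing_degrees_swap_right:
  assumes "vanishing_degrees a b c d"
  shows "vanishing_degrees a b d c"
  unfolding vanishing_degrees_def
proof (intro allI impI)
  fix x y z w
  assume "homogeneous a x" "homogeneous b y" "homogeneous d z" "homogeneous c w"
  then have "br (br x y) (br w z) = 0" using assms by (simp add: vanishing_degrees_def)
  then show "br (br x y) (br z w) = 0" by (simp add: bracket_antisym[of z w] bracket_minus_right)
qed

lemma vanishing_degrees_swap_pairs:
  assumes "vanishing_degrees a b c d"
  shows "vanishing_degrees c d a b"
  unfolding vanishing_degrees_def
proof (intro allI impI)
  fix x y z w
  assume "homogeneous c x" "homogeneous d y" "homogeneous a z" "homogeneous b w"
  then have "br (br z w) (br x y) = 0" using assms by (simp add: vanishing_degrees_def)
  then show "br (br x y) (br z w) = 0" by (metis bracket_antisym neg_0_equal_iff_equal)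
qed

lemma vanishing_degrees_if_degenerate:
  assumes "n dvd a \<or> n dvd b \<or> n dvd c \<or> n dvd d \<or> n dvd (a + b) \<or> n dvd (c + d) \<or>
    n dvd (a + b + c + d)"
  shows "vanishing_degrees a b c d"
  unfolding vanishing_degrees_def
proof (intro allI impI)
  fix x y z w
  assume x: "homogeneous a x" and y: "homogeneous b y" and z: "homogeneous c z"
    and w: "homogeneous d w"
  have "homogeneous (a + b + (c + d)) (br (br x y) (br z w))"
    using x y z w by (intro homogeneous_bracket)
  then have "x = 0 \<or> y = 0 \<or> z = 0 \<or> w = 0 \<or> br x y = 0 \<or> br z w = 0 \<or>
      br (br x y) (br z w) = 0"
    using assms homogeneous_eq_0 x y z w bracket_eq_0_if_dvd[OF x y] bracket_eq_0_if_dvd[OF z w]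
    by (auto simp: add.assoc)
  then show "br (br x y) (br z w) = 0" by auto
qed

lemma vanishing_degrees_if_dvd_triple_sums:
  assumes "n dvd (a + b + c)" and "n dvd (a + b + d)"
  shows "vanishing_degrees a b c d"
  unfolding vanishing_degrees_def
proof (intro allI impI)
  fix x y z w
  assume "homogeneous a x" "homogeneous b y" and z: "homogeneous c z" and w: "homogeneous d w"
  then have xy: "homogeneous (a + b) (br x y)" by (intro homogeneous_bracket)
  have "br (br x y) z = 0" and "br (br x y) w = 0"
    using bracket_eq_0_if_dvd[OF xy z] bracket_eq_0_if_dvd[OF xy w] assms by simp_all
  then show "br (br x y) (br z w) = 0" by (simp add: bracket_leibniz[of "br x y" z w])
qed

lemma vanishing_degrees_if_opposite_to_both:
  assumes "n dvd (a + c)" and "n dvd (a + d)" and "n dvd (b + c + d)"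
  shows "vanishing_degrees a b c d"
  unfolding vanishing_degrees_def
proof (intro allI impI)
  fix x y z w
  assume x: "homogeneous a x" and y: "homogeneous b y" and z: "homogeneous c z"
    and w: "homogeneous d w"
  have "br x z = 0" and "br x w = 0"
    using bracket_eq_0_if_dvd[OF x z] bracket_eq_0_if_dvd[OF x w] assms by simp_all
  moreover have "br y (br z w) = 0"
    using bracket_eq_0_if_dvd[OF y homogeneous_bracket[OF z w]] assms by (simp add: add.assoc)
  ultimately show "br (br x y) (br z w) = 0"
    by (simp add: bracket_leibniz_left[of x y "br z w"] bracket_leibniz[of x z w])
qed

lemma vanishing_degrees_if_opposite_pair:
  assumes "odd n" and "\<not> n dvd a" and "\<not> n dvd (a + b + c + d)" and "n dvd (a + c)"
    and "n dvd (a + d) \<or> n dvd (b + d) \<or> n dvd (a + b + d)"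
    and "n dvd (b + c) \<or> n dvd (b + d) \<or> n dvd (b + c + d)"
  shows "vanishing_degrees a b c d"
  using opposite_pair_cases[OF assms]
proof
  assume "n dvd (a + d) \<and> n dvd (b + c + d)"
  with assms(4) show ?thesis by (simp add: vanishing_degrees_if_opposite_to_both)
next
  assume "n dvd (b + c) \<and> n dvd (a + b + d)"
  with assms(4) have "vanishing_degrees c d a b"
    by (intro vanishing_degrees_if_opposite_to_both) (simp_all add: ac_simps)
  then show ?thesis by (rule vanishing_degrees_swap_pairs)
qed

end

locale independent_triples_vanish = graded_Lie_algebra_L0_trivial +
  assumes odd: "odd n"
    and independent_vanish: "\<And>d1 d2 d3 x1 x2 x3 x. d1 < n \<Longrightarrow> d2 < n \<Longrightarrow> d3 < n \<Longrightarrow>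
           minus_one_independent n [d1, d2, d3] \<Longrightarrow>
           x1 \<in> G d1 \<Longrightarrow> x2 \<in> G d2 \<Longrightarrow> x3 \<in> G d3 \<Longrightarrow>
           br (br x1 x2) (br x3 x) = 0"
begin

lemma vanishing_degrees_if_independent:
  assumes "minus_one_independent n [a, b, c]"
  shows "vanishing_degrees a b c d"
  unfolding vanishing_degrees_def homogeneous_def
proof (intro allI impI)
  fix x y z w
  assume "x \<in> G (a mod n)" "y \<in> G (b mod n)" "z \<in> G (c mod n)"
  moreover have "0 < n" using odd by (rule odd_pos)
  moreover have "minus_one_independent n [a mod n, b mod n, c mod n]"
    using assms minus_one_dependent_mod[of n "[a, b, c]"] by (simp add: minus_one_independent_def)
  ultimately show "br (br x y) (br z w) = 0"
    using independent_vanish[of "a mod n" "b mod n" "c mod n" x y z w] by simp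
qed

lemma vanishing_degrees_if_dependent:
  assumes nondegenerate: "\<not> n dvd a" "\<not> n dvd b" "\<not> n dvd c" "\<not> n dvd d"
      "\<not> n dvd (a + b)" "\<not> n dvd (c + d)" "\<not> n dvd (a + b + c + d)"
    and "minus_one_dependent n [a, b, c]" "minus_one_dependent n [a, b, d]"
      "minus_one_dependent n [c, d, a]" "minus_one_dependent n [c, d, b]"
  shows "vanishing_degrees a b c d"
proof -
  have abc: "n dvd (a + c) \<or> n dvd (b + c) \<or> n dvd (a + b + c)"
    and abd: "n dvd (a + d) \<or> n dvd (b + d) \<or> n dvd (a + b + d)"
    and cda: "n dvd (a + c) \<or> n dvd (a + d) \<or> n dvd (a + c + d)"
    and cdb: "n dvd (b + c) \<or> n dvd (b + d) \<or> n dvd (b + c + d)"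
    using assms by (simp_all add: minus_one_dependent_three_iff ac_simps)
  consider "n dvd (a + c)" | "n dvd (a + d)" | "n dvd (b + c)" | "n dvd (b + d)"
    | "n dvd (a + b + c)" "n dvd (a + b + d)"
    using abc abd by blast
  then show ?thesis
  proof cases
    case 1
    then show ?thesis using odd nondegenerate abd cdb by (intro vanishing_degrees_if_opposite_pair)
  next
    case 2
    then have "vanishing_degrees a b d c"
      by (intro vanishing_degrees_if_opposite_pair)
        (use odd nondegenerate abc cdb in \<open>auto simp: ac_simps\<close>)
    then show ?thesis by (rule vanishing_degrees_swap_right)
  next
    case 3
    then have "vanishing_degrees b a c d"
      by (intro vanishing_degrees_if_opposite_pair)
        (use odd nondegenerate abd cda in \<open>auto simp: ac_simps\<close>)
    then show ?thesis by (rule vanishing_degrees_swap_left)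
  next
    case 4
    then have "vanishing_degrees b a d c"
      by (intro vanishing_degrees_if_opposite_pair)
        (use odd nondegenerate abc cda in \<open>auto simp: ac_simps\<close>)
    then show ?thesis by (rule vanishing_degrees_swap_left[OF vanishing_degrees_swap_right])
  next
    case 5
    then show ?thesis by (rule vanishing_degrees_if_dvd_triple_sums)
  qed
qed

lemma vanishing_degrees: "vanishing_degrees a b c d"
proof -
  consider "n dvd a \<or> n dvd b \<or> n dvd c \<or> n dvd d \<or> n dvd (a + b) \<or> n dvd (c + d) \<or>
      n dvd (a + b + c + d)"
    | "minus_one_independent n [a, b, c]" | "minus_one_independent n [a, b, d]"
    | "minus_one_independent n [c, d, a]" | "minus_one_independent n [c, d, b]"
    | "\<not> n dvd a" "\<not> n dvd b" "\<not> n dvd c" "\<not> n dvd d"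
      "\<not> n dvd (a + b)" "\<not> n dvd (c + d)" "\<not> n dvd (a + b + c + d)"
      "minus_one_dependent n [a, b, c]" "minus_one_dependent n [a, b, d]"
      "minus_one_dependent n [c, d, a]" "minus_one_dependent n [c, d, b]"
    unfolding minus_one_independent_def by blast
  then show ?thesis
  proof cases
    case 1
    then show ?thesis by (rule vanishing_degrees_if_degenerate)
  next
    case 2
    then show ?thesis by (rule vanishing_degrees_if_independent)
  next
    case 3
    then show ?thesis by (rule vanishing_degrees_swap_right[OF vanishing_degrees_if_independent])
  next
    case 4
    then show ?thesis by (rule vanishing_degrees_swap_pairs[OF vanishing_degrees_if_independent])
  next
    case 5
    then have "vanishing_degrees c d b a" by (rule vanishing_degrees_if_independent)
    then show ?thesis by (rule vanishing_degrees_swap_left[OF vanishing_degrees_swap_pairs])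
  next
    case 6
    then show ?thesis by (rule vanishing_degrees_if_dependent)
  qed
qed

lemma double_commutator_eq_0: "br (br x y) (br z w) = 0"
proof (induction x rule: homogeneous_induct)
  case (homogeneous a x)
  show ?case
  proof (induction y rule: homogeneous_induct)
    case (homogeneous b y)
    show ?case
    proof (induction z rule: homogeneous_induct)
      case (homogeneous c z)
      show ?case
      proof (induction w rule: homogeneous_induct)
        case (homogeneous d w)
        then show ?case
          using vanishing_degrees \<open>homogeneous a x\<close> \<open>homogeneous b y\<close> \<open>homogeneous c z\<close>
          unfolding vanishing_degrees_def by blast
      qed (simp_all add: bracket_add_right)
    qed (simp_all add: bracket_add_left bracket_add_right)
  qed (simp_all add: bracket_add_left bracket_add_right)
qed (simp_all add: bracket_add_left)

end

theorem lemma3: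
  fixes scale :: "'k::field \<Rightarrow> 'v::ab_group_add \<Rightarrow> 'v"
    and br :: "'v \<Rightarrow> 'v \<Rightarrow> 'v"
    and n :: nat and G :: "nat \<Rightarrow> 'v set"
  assumes "odd n"
    and "graded_lie_algebra scale br n G"
    and "G 0 = {0}"
    and "\<And>d1 d2 d3 x1 x2 x3 x. d1 < n \<Longrightarrow> d2 < n \<Longrightarrow> d3 < n \<Longrightarrow>
           minus_one_independent n [d1, d2, d3] \<Longrightarrow>
           x1 \<in> G d1 \<Longrightarrow> x2 \<in> G d2 \<Longrightarrow> x3 \<in> G d3 \<Longrightarrow>
           br (br x1 x2) (br x3 x) = 0"
  shows "lie_prod scale br (lie_prod scale br UNIV UNIV) (lie_prod scale br UNIV UNIV) = {0}"
proof -
  interpret independent_triples_vanish scale br n G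
    using assms by unfold_locales
  show ?thesis by (intro metabelian_if_double_commutators_vanish double_commutator_eq_0)
qed

end
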